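(* Let $k\ge0$ be an integer. Define $$P^*(x)=(1+x)^4\big(1+(2k+4)x^2\big)^{2k+1},$$ let $A^*(x)$ be the polynomial of degree at most $2k+3$ obtained by truncating the power series of $(1+x)^2\big(1+(2k+4)x^2\big)^{(2k+1)/2}$ at degree $2k+3$, i.e. $(1+x)^2(1+(2k+4)x^2)^{(2k+1)/2}=A^*(x)+O(x^{2k+4})$ as $x\to0$, and let $Q^*=(A^* )^2$. Then $$P^*(x)-Q^*(x)=O(x^{2k+5})\quad\text{as }x\to0,$$ i.e. $x^{2k+5}$ divides $P^*-Q^*$. Equivalently, with $P(x)=(x+1)^4(x^2+2k+4)^{2k+1}$ and $A(x)=x^{2k+3}A^*(1/x)$, one has $\deg\big(P-A^2\big)\le 2k+1$.
   Context: For a polynomial $F$ of degree $d$, its reciprocal is $F^*(x)=x^dF(1/x)$. This gives the Davenport–Zannier pair (black vertices of degrees $4,2k+1,2k+1$, all white vertices of degree 2, total weight $4k+6$) for the weighted tree of series $J$. *)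

theory Defs
  imports "HOL-Computational_Algebra.Computational_Algebra" "HOL-Computational_Algebra.Polynomial_FPS"
begin

definition P_star :: "nat \<Rightarrow> real poly" where
  "P_star k = [:1, 1:] ^ 4 * [:1, 0, of_nat (2*k+4):] ^ (2*k+1)"

text \<open>The power series (1+x)^2 (1+(2k+4)x^2)^((2k+1)/2), where the real power
  (1+t)^a is the binomial series  sum_n (a gchoose n) t^n, composed with t = (2k+4) x^2.\<close>
definition A_series :: "nat \<Rightarrow> real fps" where
  "A_series k = fps_of_poly ([:1, 1:] ^ 2) *
     (fps_binomial ((2 * real k + 1) / 2) oo (fps_const (of_nat (2*k+4)) * fps_X ^ 2))"

text \<open>A*: truncation of that series at degree 2k+3 (keeps coefficients of x^0..x^(2k+3)).\<close>
definition A_star :: "nat \<Rightarrow> real poly" where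
  "A_star k = truncate_fps (2*k+4) (A_series k)"

end

theory Submission
  imports Defs
begin

text \<open>The square of the binomial series (1 + t)^((2k+1)/2) is (1 + t)^(2k+1), so the
  series A = (1 + x)^2 (1 + (2k+4) x^2)^((2k+1)/2) satisfies A^2 = P* exactly. The truncation A*
  drops only the coefficients of degree at least 2k+4, and the coefficient of degree 2k+4
  vanishes because the binomial recurrence makes its two contributions cancel. Hence A* agrees
  with A up to degree 2k+4, and so does (A*)^2 with A^2 = P*.\<close>

lemma fps_compose_const_mult_X2_nth:
  fixes f :: "'a::comm_semiring_1 fps"
  shows "(f oo (fps_const c * fps_X ^ 2)) $ n = (if even n then f $ (n div 2) * c ^ (n div 2) else 0)"
proof -
  have "(fps_const c * fps_X ^ 2) ^ i = fps_const (c ^ i) * fps_X ^ (2 * i)" for i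
    by (simp only: power_mult_distrib fps_const_power power_mult)
  then have "(f oo (fps_const c * fps_X ^ 2)) $ n
      = (\<Sum>i\<in>{0..n}. if i = n div 2 \<and> even n then f $ i * c ^ i else 0)"
    unfolding fps_compose_nth by (intro sum.cong) auto
  then show ?thesis
    by (cases "even n") (auto simp: sum.delta)
qed

lemma fps_mult_nth_cong:
  assumes "\<And>j. j \<le> n \<Longrightarrow> f $ j = f' $ j" and "\<And>j. j \<le> n \<Longrightarrow> g $ j = g' $ j"
  shows "(f * g) $ n = (f' * g') $ n"
  unfolding fps_mult_nth using assms by (intro sum.cong) auto

lemma gbinomial_half_odd_step:
  "(2 * real k + 4) * ((2 * real k + 1) / 2 gchoose (k + 2)) = - ((2 * real k + 1) / 2 gchoose (k + 1))"
  using gbinomial_mult_1[of "(2 * real k + 1) / 2" "k + 1"] by (simp add: algebra_simps)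

lemma A_series_squared: "A_series k ^ 2 = fps_of_poly (P_star k)"
proof -
  define G :: "real fps" where "G = fps_const (of_nat (2 * k + 4)) * fps_X ^ 2"
  have G0: "G $ 0 = 0"
    unfolding G_def by simp
  have "(fps_binomial ((2 * real k + 1) / 2) oo G) ^ 2 = fps_binomial ((2 * real k + 1) / 2) ^ 2 oo G"
    by (rule fps_compose_power[OF G0])
  also have "fps_binomial ((2 * real k + 1) / 2) ^ 2 = fps_binomial (of_nat (2 * k + 1))"
  proof -
    have "of_nat 2 * ((2 * real k + 1) / 2) = of_nat (2 * k + 1)"
      by simp
    then show ?thesis
      by (simp only: fps_binomial_power)
  qed
  also have "\<dots> = (1 + fps_X) ^ (2 * k + 1)"
    by (rule fps_binomial_of_nat)
  also have "(1 + fps_X) ^ (2 * k + 1) oo G = (1 + G) ^ (2 * k + 1)"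
    using fps_compose_power[OF G0, of "1 + fps_X" "2 * k + 1"] by (simp add: fps_compose_add_distrib G0)
  finally have binomial_squared: "(fps_binomial ((2 * real k + 1) / 2) oo G) ^ 2 = (1 + G) ^ (2 * k + 1)" .
  have linear: "fps_of_poly [:1, 1:] = (1 + fps_X :: real fps)"
    by (simp add: fps_of_poly_linear')
  have quadratic: "fps_of_poly [:1, 0, of_nat (2 * k + 4):] = 1 + G"
    unfolding G_def by (simp add: fps_of_poly_pCons algebra_simps power2_eq_square)
  have "fps_of_poly (P_star k) = (1 + fps_X) ^ 4 * (1 + G) ^ (2 * k + 1)"
    unfolding P_star_def by (simp only: fps_of_poly_mult fps_of_poly_power linear quadratic)
  moreover have "fps_of_poly ([:1, 1:] ^ 2) = (1 + fps_X :: real fps) ^ 2"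
    by (simp add: fps_of_poly_power fps_of_poly_linear')
  ultimately show ?thesis
    unfolding A_series_def G_def[symmetric] power_mult_distrib binomial_squared
    by (simp add: power_mult[symmetric])
qed

lemma A_series_nth_vanishes: "A_series k $ (2 * k + 4) = 0"
proof -
  define H where "H = fps_binomial ((2 * real k + 1) / 2) oo (fps_const (of_nat (2 * k + 4)) * fps_X ^ 2)"
  have H_nth: "H $ n = (if even n then ((2 * real k + 1) / 2 gchoose (n div 2)) * (2 * real k + 4) ^ (n div 2)
      else 0)" for n
    unfolding H_def fps_compose_const_mult_X2_nth by simp
  have square: "fps_of_poly ([:1, 1:] ^ 2) = 1 + 2 * fps_X + fps_X ^ 2"
    by (simp add: fps_of_poly_power fps_of_poly_pCons power2_eq_square algebra_simps)
  have expand: "A_series k = H + fps_X * H + fps_X * H + fps_X ^ 2 * H"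
    unfolding A_series_def H_def[symmetric] square by (simp add: algebra_simps)
  have "(fps_X * H) $ (2 * k + 4) = H $ (2 * k + 3)"
    by (simp add: fps_X_mult_nth add.commute)
  moreover have "(fps_X ^ 2 * H) $ (2 * k + 4) = H $ (2 * k + 2)"
    by (simp add: fps_X_power_mult_nth)
  ultimately have "A_series k $ (2 * k + 4) = H $ (2 * k + 4) + 2 * H $ (2 * k + 3) + H $ (2 * k + 2)"
    unfolding expand fps_add_nth by simp
  also have "\<dots> = (2 * real k + 4) ^ (k + 1) * ((2 * real k + 4) * ((2 * real k + 1) / 2 gchoose (k + 2))
      + ((2 * real k + 1) / 2 gchoose (k + 1)))"
    unfolding H_nth by (simp add: algebra_simps)
  also have "\<dots> = 0"
    unfolding gbinomial_half_odd_step by simp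
  finally show ?thesis .
qed

lemma coeff_A_star: "j \<le> 2 * k + 4 \<Longrightarrow> coeff (A_star k) j = A_series k $ j"
  using A_series_nth_vanishes[of k] unfolding A_star_def coeff_truncate_fps
  by (cases "j = 2 * k + 4") auto

theorem mainTheorem9:
  fixes k :: nat
  shows "(monom 1 (2*k+5) :: real poly) dvd (P_star k - (A_star k) ^ 2)"
proof (unfold monom_1_dvd_iff', intro allI impI)
  fix i
  assume "i < 2 * k + 5"
  then have "(A_series k * A_series k) $ i = (fps_of_poly (A_star k) * fps_of_poly (A_star k)) $ i"
    by (intro fps_mult_nth_cong) (simp_all add: coeff_A_star)
  then have "coeff (P_star k) i = coeff (A_star k ^ 2) i"
    by (metis A_series_squared fps_of_poly_mult fps_of_poly_nth power2_eq_square)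
  then show "coeff (P_star k - A_star k ^ 2) i = 0"
    by simp
qed

end
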